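(* Let $\mathcal{M}=(M_i\colon i\in K)$ be a family of matroids on a common ground set $E$, let $e\in E$, and suppose that $\mathcal{M}\restriction(E\setminus\{e\})$ admits a covering. Then $\mathcal{M}$ admits a covering if and only if there is no $\mathcal{M}$-tight set $X\subseteq E\setminus\{e\}$ with $e\in\mathrm{span}_{M_i}(X)$ for every $i\in K$.
   Context: Matroids here are possibly infinite (given by independence axioms: $\emptyset$ independent, subsets of independent sets independent, the augmentation axiom relative to maximal independent sets, and that every independent subset of any $X\subseteq E$ extends to a maximal independent subset of $X$). Circuits are minimal dependent sets; $X$ spans $e$ in $M$ if $e\in X$ or some circuit $C\ni e$ has $C\setminus\{e\}\subseteq X$; $\mathrm{span}_M(X)$ is the set of elements spanned by $X$; $S\subseteq Y$ is spanning in a matroid on $Y$ if it spans all of $Y$. For $X\subseteq E$, $M\restriction X=(X,\mathcal{I}\cap\mathcal{P}(X))$ and $\mathcal{M}\restriction X=(M_i\restriction X\colon i\in K)$. A covering of a family $(N_i\colon i\in K)$ of matroids on a set $Y$ is a family $(R_i\colon i\in K)$ with $R_i$ independent in $N_i$ and $\bigcup_i R_i=Y$. A family is tight if it admits a covering and in every covering each $R_i$ is spanning in $N_i$. A set $X\subseteq E$ is $\mathcal{M}$-tight if $\mathcal{M}\restriction X$ is tight. *)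

theory Defs
  imports Main
begin

text \<open>A (possibly infinite) matroid on ground set E is represented by its set of
independent sets I, satisfying the independence axioms.\<close>

definition max_indep :: "'a set set \<Rightarrow> 'a set \<Rightarrow> bool" where
  "max_indep I B \<longleftrightarrow> B \<in> I \<and> (\<forall>C\<in>I. B \<subseteq> C \<longrightarrow> C = B)"

definition matroid :: "'a set \<Rightarrow> 'a set set \<Rightarrow> bool" where
  "matroid E I \<longleftrightarrow>
     I \<subseteq> Pow E \<and>
     {} \<in> I \<and>
     (\<forall>A\<in>I. \<forall>B. B \<subseteq> A \<longrightarrow> B \<in> I) \<and>
     (\<forall>A B. A \<in> I \<and> \<not> max_indep I A \<and> max_indep I B \<longrightarrow>
            (\<exists>x\<in>B - A. insert x A \<in> I)) \<and>
     (\<forall>X A. X \<subseteq> E \<and> A \<in> I \<and> A \<subseteq> X \<longrightarrow>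
            (\<exists>B. max_indep (I \<inter> Pow X) B \<and> A \<subseteq> B))"

definition circuit :: "'a set \<Rightarrow> 'a set set \<Rightarrow> 'a set \<Rightarrow> bool" where
  "circuit E I C \<longleftrightarrow> C \<subseteq> E \<and> C \<notin> I \<and> (\<forall>D. D \<subset> C \<longrightarrow> D \<in> I)"

definition spans :: "'a set \<Rightarrow> 'a set set \<Rightarrow> 'a set \<Rightarrow> 'a \<Rightarrow> bool" where
  "spans E I X e \<longleftrightarrow> e \<in> X \<or> (\<exists>C. circuit E I C \<and> e \<in> C \<and> C - {e} \<subseteq> X)"

definition span :: "'a set \<Rightarrow> 'a set set \<Rightarrow> 'a set \<Rightarrow> 'a set" where
  "span E I X = {e. spans E I X e}"

definition spanning :: "'a set \<Rightarrow> 'a set set \<Rightarrow> 'a set \<Rightarrow> bool" where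
  "spanning Y I S \<longleftrightarrow> (\<forall>y\<in>Y. spans Y I S y)"

definition restr :: "'a set \<Rightarrow> 'a set set \<Rightarrow> 'a set set" where
  "restr X I = I \<inter> Pow X"

definition covering :: "'k set \<Rightarrow> 'a set \<Rightarrow> ('k \<Rightarrow> 'a set set) \<Rightarrow> ('k \<Rightarrow> 'a set) \<Rightarrow> bool" where
  "covering K Y N R \<longleftrightarrow> (\<forall>i\<in>K. R i \<in> N i) \<and> (\<Union>i\<in>K. R i) = Y"

definition has_covering :: "'k set \<Rightarrow> 'a set \<Rightarrow> ('k \<Rightarrow> 'a set set) \<Rightarrow> bool" where
  "has_covering K Y N \<longleftrightarrow> (\<exists>R. covering K Y N R)"

definition tight :: "'k set \<Rightarrow> 'a set \<Rightarrow> ('k \<Rightarrow> 'a set set) \<Rightarrow> bool" where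
  "tight K Y N \<longleftrightarrow> has_covering K Y N \<and>
     (\<forall>R. covering K Y N R \<longrightarrow> (\<forall>i\<in>K. spanning Y (N i) (R i)))"

definition family_tight :: "'k set \<Rightarrow> ('k \<Rightarrow> 'a set set) \<Rightarrow> 'a set \<Rightarrow> bool" where
  "family_tight K M X \<longleftrightarrow> tight K X (\<lambda>i. restr X (M i))"

end

(*
  If M has a covering R and X is tight, then restricting R to X covers M|X, so every R i \<inter> X is a
  base of X in M i.  For the i with e \<in> R i, a circuit through e spanned by X can therefore be
  swapped into R i in place of R i \<inter> X, which is absurd.

  Conversely, fix a covering T of E - {e} and consider the exchange graph: an arc of colour j
  leads from x to y if x cannot be added to T j but can replace y in it.  Exchanging along a
  shortest path from e to w is possible in all colours simultaneously and yields independent sets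
  covering E - {w}.  So if M has no covering, no element w reachable from e can be added to any
  T j, i.e. T j meets the reachable set W in a base of W.  Then e is spanned by X = W - {e}
  in every M j, and X is tight: a covering of X with slack could be combined with T outside W
  into a new covering of E - {e} whose reachable set misses the slack element, and the path
  exchange above would then produce a covering of E.
*)
theory Submission
  imports Defs
begin

section \<open>Bases, circuits and spans\<close>

lemma matroid_indep_subset_ground: "matroid E I \<Longrightarrow> A \<in> I \<Longrightarrow> A \<subseteq> E"
  unfolding matroid_def by (elim conjE) blast

lemma matroid_indep_subset: "matroid E I \<Longrightarrow> A \<in> I \<Longrightarrow> B \<subseteq> A \<Longrightarrow> B \<in> I"
  unfolding matroid_def by (elim conjE) blast

lemma matroid_augment:
  assumes "matroid E I" "A \<in> I" "\<not> max_indep I A" "max_indep I B"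
  shows "\<exists>x\<in>B - A. insert x A \<in> I"
proof -
  have "\<forall>A B. A \<in> I \<and> \<not> max_indep I A \<and> max_indep I B \<longrightarrow> (\<exists>x\<in>B - A. insert x A \<in> I)"
    using assms(1) unfolding matroid_def by (elim conjE)
  then show ?thesis using assms(2-4) by blast
qed

lemma matroid_extend_max_indep_restr:
  assumes "matroid E I" "X \<subseteq> E" "A \<in> I" "A \<subseteq> X"
  shows "\<exists>B. max_indep (restr X I) B \<and> A \<subseteq> B"
proof -
  have "\<forall>X A. X \<subseteq> E \<and> A \<in> I \<and> A \<subseteq> X \<longrightarrow> (\<exists>B. max_indep (I \<inter> Pow X) B \<and> A \<subseteq> B)"
    using assms(1) unfolding matroid_def by (elim conjE)
  then show ?thesis using assms(2-4) unfolding restr_def by blast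
qed

lemma max_indep_restr_iff:
  assumes "matroid E I"
  shows "max_indep (restr X I) B \<longleftrightarrow> B \<in> I \<and> B \<subseteq> X \<and> (\<forall>y\<in>X - B. insert y B \<notin> I)"
proof
  assume "max_indep (restr X I) B"
  then show "B \<in> I \<and> B \<subseteq> X \<and> (\<forall>y\<in>X - B. insert y B \<notin> I)"
    unfolding max_indep_def restr_def by blast
next
  assume B: "B \<in> I \<and> B \<subseteq> X \<and> (\<forall>y\<in>X - B. insert y B \<notin> I)"
  have "C = B" if "C \<in> I" "C \<subseteq> X" "B \<subseteq> C" for C
  proof (rule ccontr)
    assume "C \<noteq> B"
    then obtain y where "y \<in> C - B" using \<open>B \<subseteq> C\<close> by blast
    then have "insert y B \<in> I" using matroid_indep_subset[OF assms \<open>C \<in> I\<close>] \<open>B \<subseteq> C\<close> by blast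
    then show False using B \<open>y \<in> C - B\<close> \<open>C \<subseteq> X\<close> by blast
  qed
  then show "max_indep (restr X I) B" using B unfolding max_indep_def restr_def by blast
qed

lemma max_indep_restr_ground:
  assumes "matroid E I"
  shows "max_indep (restr E I) B \<longleftrightarrow> max_indep I B"
  using matroid_indep_subset_ground[OF assms] unfolding max_indep_def restr_def by blast

lemma matroid_extend_base:
  assumes "matroid E I" "A \<in> I"
  obtains B where "max_indep I B" "A \<subseteq> B"
  using matroid_extend_max_indep_restr[OF assms(1) order_refl assms(2)]
    matroid_indep_subset_ground[OF assms] max_indep_restr_ground[OF assms(1)] by blast

lemma base_exchange:
  assumes M: "matroid E I" and A: "max_indep I A" and B: "max_indep I B" and b: "b \<in> B - A"
  obtains a where "a \<in> A - B" "insert a (B - {b}) \<in> I"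
proof -
  have BI: "B \<in> I" using B unfolding max_indep_def by blast
  have "B - {b} \<in> I" using matroid_indep_subset[OF M BI] by blast
  moreover have "\<not> max_indep I (B - {b})" using BI b unfolding max_indep_def by blast
  ultimately obtain a where "a \<in> A - (B - {b})" "insert a (B - {b}) \<in> I"
    using matroid_augment[OF M _ _ A] by blast
  with b show thesis using that by blast
qed

lemma circuit_not_indep: "circuit E I C \<Longrightarrow> C \<notin> I"
  unfolding circuit_def by blast

lemma circuit_psubset_indep: "circuit E I C \<Longrightarrow> D \<subset> C \<Longrightarrow> D \<in> I"
  unfolding circuit_def by blast

lemma circuit_restr_iff:
  assumes "matroid E I" "X \<subseteq> E"
  shows "circuit X (restr X I) C \<longleftrightarrow> circuit E I C \<and> C \<subseteq> X"
  using assms unfolding circuit_def restr_def by auto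

lemma base_exchange_set_dependent:
  assumes M: "matroid E I" and B: "max_indep I B" and x: "x \<in> E" "x \<notin> B"
  shows "insert x {y \<in> B. insert x (B - {y}) \<in> I} \<notin> I" (is "?C \<notin> I")
proof
  assume CI: "?C \<in> I"
  have BI: "B \<in> I" using B unfolding max_indep_def by blast
  have "insert x B \<subseteq> E" using matroid_indep_subset_ground[OF M BI] x(1) by blast
  moreover have "?C \<subseteq> insert x B" by blast
  ultimately obtain B0 where B0: "max_indep (restr (insert x B) I) B0" "?C \<subseteq> B0"
    using matroid_extend_max_indep_restr[OF M _ CI] by blast
  have B0I: "B0 \<in> I" "B0 \<subseteq> insert x B" "\<forall>z\<in>insert x B - B0. insert z B0 \<notin> I"
    using B0(1) unfolding max_indep_restr_iff[OF M] by blast+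
  have B0_base: "max_indep I B0"
  proof (rule ccontr)
    assume "\<not> max_indep I B0"
    then obtain z where "z \<in> B - B0" "insert z B0 \<in> I"
      using matroid_augment[OF M B0I(1) _ B] by blast
    then show False using B0I(3) by blast
  qed
  have "\<not> B \<subseteq> B0"
  proof
    assume "B \<subseteq> B0"
    then have "B0 = B" using B B0I(1) unfolding max_indep_def by blast
    then show False using B0(2) x(2) by blast
  qed
  then obtain y where y: "y \<in> B - B0" by blast
  obtain a where "a \<in> B0 - B" "insert a (B - {y}) \<in> I"
    using base_exchange[OF M B0_base B y] .
  then have "insert x (B - {y}) \<in> I" using B0I(2) by blast
  then have "y \<in> ?C" using y by blast
  then show False using B0(2) y by blast
qed

lemma base_exchange_set_circuit:
  assumes M: "matroid E I" and B: "max_indep I B" and x: "x \<in> E" "x \<notin> B"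
  shows "circuit E I (insert x {y \<in> B. insert x (B - {y}) \<in> I})" (is "circuit E I ?C")
  unfolding circuit_def
proof (intro conjI allI impI)
  have BI: "B \<in> I" using B unfolding max_indep_def by blast
  show "?C \<subseteq> E" using matroid_indep_subset_ground[OF M BI] x(1) by blast
  show "?C \<notin> I" by (rule base_exchange_set_dependent[OF M B x])
  fix D assume D: "D \<subset> ?C"
  show "D \<in> I"
  proof (cases "x \<in> D")
    case False
    then have "D \<subseteq> B" using D by blast
    then show ?thesis using matroid_indep_subset[OF M BI] by blast
  next
    case True
    then obtain y where "y \<in> ?C - D" "y \<noteq> x" using D by blast
    then have "insert x (B - {y}) \<in> I" "D \<subseteq> insert x (B - {y})" using D True by auto
    then show ?thesis using matroid_indep_subset[OF M] by blast
  qed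
qed

lemma fundamental_circuit:
  assumes M: "matroid E I" and J: "J \<in> I" and x: "x \<in> E" and dep: "insert x J \<notin> I"
  obtains C where "circuit E I C" "x \<in> C" "C \<subseteq> insert x J"
    "\<And>y. y \<in> J \<Longrightarrow> y \<in> C \<longleftrightarrow> insert x (J - {y}) \<in> I"
    "\<And>C'. circuit E I C' \<Longrightarrow> C' \<subseteq> insert x J \<Longrightarrow> C' = C"
proof -
  obtain B where B: "max_indep I B" "J \<subseteq> B" using matroid_extend_base[OF M J] by blast
  have BI: "B \<in> I" using B unfolding max_indep_def by blast
  have dep_sub: "A \<notin> I" if "insert x J \<subseteq> A" for A
    using that dep matroid_indep_subset[OF M] by blast
  have xB: "x \<notin> B" using B(2) dep_sub BI by blast
  define C where "C = insert x {y \<in> B. insert x (B - {y}) \<in> I}"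
  have xC: "x \<in> C" unfolding C_def by simp
  have C_sub: "C \<subseteq> insert x J"
  proof
    fix y assume "y \<in> C"
    show "y \<in> insert x J"
    proof (rule ccontr)
      assume y: "y \<notin> insert x J"
      then have "insert x J \<subseteq> insert x (B - {y})" using B(2) by blast
      then have "insert x (B - {y}) \<notin> I" by (rule dep_sub)
      then show False using \<open>y \<in> C\<close> y unfolding C_def by blast
    qed
  qed
  have C_circuit: "circuit E I C" unfolding C_def by (rule base_exchange_set_circuit[OF M B(1) x xB])
  have C_dep: "C \<notin> I" using C_circuit by (rule circuit_not_indep)
  have exchange_iff: "y \<in> C \<longleftrightarrow> insert x (J - {y}) \<in> I" if "y \<in> J" for y
  proof
    assume "y \<in> C"
    then have "insert x (B - {y}) \<in> I" using that xB B(2) unfolding C_def by auto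
    moreover have "insert x (J - {y}) \<subseteq> insert x (B - {y})" using B(2) by blast
    ultimately show "insert x (J - {y}) \<in> I" by (rule matroid_indep_subset[OF M])
  next
    assume indep: "insert x (J - {y}) \<in> I"
    show "y \<in> C"
    proof (rule ccontr)
      assume "y \<notin> C"
      then have "C \<subseteq> insert x (J - {y})" using C_sub by blast
      then show False using C_dep matroid_indep_subset[OF M indep] by blast
    qed
  qed
  have unique: "C' = C" if C': "circuit E I C'" "C' \<subseteq> insert x J" for C'
  proof -
    have "x \<in> C'"
      using C' circuit_not_indep matroid_indep_subset[OF M J] by blast
    have "C \<subseteq> C'"
    proof
      fix y assume "y \<in> C"
      show "y \<in> C'"
      proof (rule ccontr)
        assume "y \<notin> C'"
        then have "insert x (B - {y}) \<in> I" "C' \<subseteq> insert x (B - {y})"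
          using \<open>y \<in> C\<close> \<open>x \<in> C'\<close> C'(2) B(2) unfolding C_def by auto
        then show False using C'(1) circuit_not_indep matroid_indep_subset[OF M] by blast
      qed
    qed
    then show ?thesis using circuit_psubset_indep[OF C'(1)] C_dep by blast
  qed
  show thesis using that[OF C_circuit xC C_sub exchange_iff unique] .
qed

lemma spans_indep_iff:
  assumes M: "matroid E I" and S: "S \<in> I" and y: "y \<in> E"
  shows "spans E I S y \<longleftrightarrow> y \<in> S \<or> insert y S \<notin> I"
proof
  assume "spans E I S y"
  then consider "y \<in> S" | C where "circuit E I C" "y \<in> C" "C - {y} \<subseteq> S"
    unfolding spans_def by blast
  then show "y \<in> S \<or> insert y S \<notin> I"
  proof cases
    case 2
    then have "C \<subseteq> insert y S" by blast
    then have "insert y S \<notin> I" using circuit_not_indep[OF 2(1)] matroid_indep_subset[OF M] by blast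
    then show ?thesis by blast
  qed simp
next
  assume "y \<in> S \<or> insert y S \<notin> I"
  then show "spans E I S y"
  proof
    assume "insert y S \<notin> I"
    then obtain C where "circuit E I C" "y \<in> C" "C \<subseteq> insert y S"
      by (rule fundamental_circuit[OF M S y])
    then show ?thesis unfolding spans_def by blast
  qed (simp add: spans_def)
qed

lemma spans_restr_iff:
  assumes "matroid E I" "X \<subseteq> E" "S \<subseteq> X" "y \<in> X"
  shows "spans X (restr X I) S y \<longleftrightarrow> spans E I S y"
  using assms circuit_restr_iff[OF assms(1,2)] unfolding spans_def by blast

lemma spanning_restr_iff_max_indep:
  assumes M: "matroid E I" and X: "X \<subseteq> E" and S: "S \<in> restr X I"
  shows "spanning X (restr X I) S \<longleftrightarrow> max_indep (restr X I) S"
proof -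
  have SI: "S \<in> I" "S \<subseteq> X" using S unfolding restr_def by blast+
  have "spans X (restr X I) S y \<longleftrightarrow> y \<in> S \<or> insert y S \<notin> I" if "y \<in> X" for y
    using spans_restr_iff[OF M X SI(2) that] spans_indep_iff[OF M SI(1)] that X by blast
  then show ?thesis
    unfolding spanning_def max_indep_restr_iff[OF M] using SI by blast
qed

section \<open>Tight sets\<close>

lemma base_contains_outside_part:
  assumes M: "matroid E I" and A: "max_indep I A" and B: "max_indep I B" "R \<subseteq> B"
    and RW: "max_indep (restr W I) (R \<inter> W)" and AB: "A - B \<subseteq> W"
  shows "B - W \<subseteq> A"
proof
  fix b assume b: "b \<in> B - W"
  show "b \<in> A"
  proof (rule ccontr)
    assume "b \<notin> A"
    then obtain a where a: "a \<in> A - B" "insert a (B - {b}) \<in> I"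
      using base_exchange[OF M A B(1)] b by blast
    have "a \<in> W - R \<inter> W" using a(1) AB B(2) by blast
    then have "insert a (R \<inter> W) \<notin> I" using RW unfolding max_indep_restr_iff[OF M] by blast
    moreover have "insert a (R \<inter> W) \<subseteq> insert a (B - {b})" using B(2) b by blast
    ultimately show False using matroid_indep_subset[OF M a(2)] by blast
  qed
qed

lemma indep_replace_restr_base:
  assumes M: "matroid E I" and R: "R \<in> I" and W: "W \<subseteq> E"
    and RW: "max_indep (restr W I) (R \<inter> W)" and S: "S \<in> I" "S \<subseteq> W"
  shows "S \<union> (R - W) \<in> I"
proof -
  obtain S' where S': "max_indep (restr W I) S'" "S \<subseteq> S'"
    using matroid_extend_max_indep_restr[OF M W S] by blast
  have S'I: "S' \<in> I" "S' \<subseteq> W" "\<forall>z\<in>W - S'. insert z S' \<notin> I"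
    using S'(1) unfolding max_indep_restr_iff[OF M] by blast+
  obtain B where B: "max_indep I B" "R \<subseteq> B" using matroid_extend_base[OF M R] by blast
  have BI: "B \<in> I" using B(1) unfolding max_indep_def by blast
  have "S' \<union> (B - W) \<subseteq> E" using S'I(2) W matroid_indep_subset_ground[OF M BI] by blast
  then obtain A where A: "max_indep (restr (S' \<union> (B - W)) I) A" "S' \<subseteq> A"
    using matroid_extend_max_indep_restr[OF M _ S'I(1)] by blast
  have AI: "A \<in> I" "A \<subseteq> S' \<union> (B - W)" "\<forall>z\<in>S' \<union> (B - W) - A. insert z A \<notin> I"
    using A(1) unfolding max_indep_restr_iff[OF M] by blast+
  have A_base: "max_indep I A"
  proof (rule ccontr)
    assume "\<not> max_indep I A"
    then obtain z where z: "z \<in> B - A" "insert z A \<in> I"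
      using matroid_augment[OF M AI(1) _ B(1)] by blast
    show False
    proof (cases "z \<in> W")
      case True
      have "insert z S' \<subseteq> insert z A" using A(2) by blast
      then have "insert z S' \<in> I" by (rule matroid_indep_subset[OF M z(2)])
      moreover have "z \<in> W - S'" using True z(1) A(2) by blast
      ultimately show False using S'I(3) by blast
    next
      case False
      then show False using z AI(3) by blast
    qed
  qed
  have "A - B \<subseteq> W" using AI(2) S'I(2) by blast
  then have "B - W \<subseteq> A" by (rule base_contains_outside_part[OF M A_base B RW])
  then have "S \<union> (R - W) \<subseteq> A" using S'(2) A(2) B(2) by blast
  then show ?thesis by (rule matroid_indep_subset[OF M AI(1)])
qed

lemma covering_restr_covering: "covering K Y (\<lambda>i. restr X (M i)) R \<Longrightarrow> covering K Y M R"
  unfolding covering_def restr_def by blast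

lemma covering_restr:
  assumes M: "\<forall>i\<in>K. matroid E (M i)" and R: "covering K Y M R" and X: "X \<subseteq> Y"
  shows "covering K X (\<lambda>i. restr X (M i)) (\<lambda>i. R i \<inter> X)"
proof -
  have "R i \<inter> X \<in> restr X (M i)" if "i \<in> K" for i
    using matroid_indep_subset[of E "M i" "R i"] M R that unfolding covering_def restr_def by blast
  moreover have "(\<Union>i\<in>K. R i \<inter> X) = X" using R X unfolding covering_def by blast
  ultimately show ?thesis unfolding covering_def by blast
qed

lemma family_tight_iff:
  assumes M: "\<forall>i\<in>K. matroid E (M i)" and X: "X \<subseteq> E"
  shows "family_tight K M X \<longleftrightarrow> has_covering K X (\<lambda>i. restr X (M i)) \<and>
    (\<forall>R. covering K X (\<lambda>i. restr X (M i)) R \<longrightarrow> (\<forall>i\<in>K. max_indep (restr X (M i)) (R i)))"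
proof -
  have "spanning X (restr X (M i)) (R i) \<longleftrightarrow> max_indep (restr X (M i)) (R i)"
    if "covering K X (\<lambda>i. restr X (M i)) R" "i \<in> K" for R i
    using spanning_restr_iff_max_indep[of E "M i" X "R i"] M X that unfolding covering_def by blast
  then show ?thesis unfolding family_tight_def tight_def by blast
qed

lemma tight_spanning_set_prevents_covering:
  assumes M: "\<forall>i\<in>K. matroid E (M i)" and e: "e \<in> E" and X: "X \<subseteq> E - {e}"
    and tight: "family_tight K M X" and spans: "\<forall>i\<in>K. e \<in> span E (M i) X"
  shows "\<not> has_covering K E M"
proof
  assume "has_covering K E M"
  then obtain R where R: "covering K E M R" unfolding has_covering_def by blast
  then obtain k where k: "k \<in> K" "e \<in> R k" using e unfolding covering_def by blast
  have Mk: "matroid E (M k)" using M k(1) by blast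
  have XE: "X \<subseteq> E" using X by blast
  have Rk: "R k \<in> M k" using R k(1) unfolding covering_def by blast
  have "max_indep (restr X (M k)) (R k \<inter> X)"
    using covering_restr[OF M R XE] tight k(1) unfolding family_tight_iff[OF M XE] by blast
  moreover obtain C where C: "circuit E (M k) C" "e \<in> C" "C - {e} \<subseteq> X"
    using spans k(1) X unfolding span_def spans_def by blast
  moreover have "C - {e} \<in> M k" using circuit_psubset_indep[OF C(1)] C(2) by blast
  ultimately have "(C - {e}) \<union> (R k - X) \<in> M k"
    using indep_replace_restr_base[OF Mk Rk XE] by blast
  moreover have "C \<subseteq> (C - {e}) \<union> (R k - X)" using k(2) X by blast
  ultimately show False using circuit_not_indep[OF C(1)] matroid_indep_subset[OF Mk] by blast
qed

section \<open>Simultaneous exchange\<close>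

lemma fundamental_circuit_transfer:
  assumes M: "matroid E I" and J: "J \<in> I" and J': "J' \<in> I" and x: "x \<in> E"
    and dep: "insert x J \<notin> I"
    and circuits: "\<And>C. circuit E I C \<Longrightarrow> C \<subseteq> insert x J \<Longrightarrow> C \<subseteq> insert x J'"
  shows "insert x J' \<notin> I"
    and "\<And>y. y \<in> J \<inter> J' \<Longrightarrow> insert x (J' - {y}) \<in> I \<longleftrightarrow> insert x (J - {y}) \<in> I"
proof -
  obtain C where C: "circuit E I C" "C \<subseteq> insert x J"
    "\<And>y. y \<in> J \<Longrightarrow> y \<in> C \<longleftrightarrow> insert x (J - {y}) \<in> I"
    by (rule fundamental_circuit[OF M J x dep]) blast
  have C_sub: "C \<subseteq> insert x J'" using circuits[OF C(1,2)] .
  show dep': "insert x J' \<notin> I"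
    using circuit_not_indep[OF C(1)] matroid_indep_subset[OF M _ C_sub] by blast
  obtain C' where C': "\<And>y. y \<in> J' \<Longrightarrow> y \<in> C' \<longleftrightarrow> insert x (J' - {y}) \<in> I"
    "\<And>D. circuit E I D \<Longrightarrow> D \<subseteq> insert x J' \<Longrightarrow> D = C'"
    by (rule fundamental_circuit[OF M J' x dep']) blast
  have "C = C'" using C'(2)[OF C(1) C_sub] .
  then show "insert x (J' - {y}) \<in> I \<longleftrightarrow> insert x (J - {y}) \<in> I" if "y \<in> J \<inter> J'" for y
    using C(3) C'(1) that by blast
qed

definition exchangeable :: "'a set set \<Rightarrow> 'a set \<Rightarrow> 'a \<Rightarrow> 'a \<Rightarrow> bool" where
  "exchangeable I J x y \<longleftrightarrow> insert x J \<notin> I \<and> y \<in> J \<and> insert x (J - {y}) \<in> I"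

lemma exchangeable_source_in:
  assumes M: "matroid E I" and J: "J \<in> I" and xy: "exchangeable I J x y"
  shows "x \<in> E - J"
proof -
  have indep: "insert x (J - {y}) \<in> I" and dep: "insert x J \<notin> I"
    using xy unfolding exchangeable_def by blast+
  have "x \<in> E" using matroid_indep_subset_ground[OF M indep] by blast
  moreover have "x \<notin> J"
  proof
    assume "x \<in> J"
    then have "insert x J = J" by (rule insert_absorb)
    then show False using dep J by simp
  qed
  ultimately show ?thesis by blast
qed

lemma fundamental_circuit_after_exchange:
  assumes M: "matroid E I" and J: "J \<in> I" and xy': "exchangeable I J x' y'"
    and x: "x \<in> E" "insert x J \<notin> I" "insert x (J - {y'}) \<notin> I"
  defines "J' \<equiv> insert x' (J - {y'})"
  shows "insert x J' \<notin> I"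
    and "\<And>y. y \<in> J - {y'} \<Longrightarrow> insert x (J' - {y}) \<in> I \<longleftrightarrow> insert x (J - {y}) \<in> I"
proof -
  have J': "J' \<in> I" using xy' unfolding exchangeable_def J'_def by blast
  have circuits: "C \<subseteq> insert x J'" if C: "circuit E I C" "C \<subseteq> insert x J" for C
  proof -
    obtain C0 where C0: "\<And>y. y \<in> J \<Longrightarrow> y \<in> C0 \<longleftrightarrow> insert x (J - {y}) \<in> I"
      "\<And>D. circuit E I D \<Longrightarrow> D \<subseteq> insert x J \<Longrightarrow> D = C0"
      by (rule fundamental_circuit[OF M J x(1,2)]) blast
    have "y' \<notin> C0" using C0(1) x(3) xy' unfolding exchangeable_def by blast
    then show ?thesis using C0(2)[OF C] C(2) unfolding J'_def by blast
  qed
  show "insert x J' \<notin> I"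
    by (rule fundamental_circuit_transfer(1)[OF M J J' x(1,2) circuits])
  have "x' \<notin> J" using exchangeable_source_in[OF M J xy'] by blast
  then have "J \<inter> J' = J - {y'}" unfolding J'_def by blast
  then show "insert x (J' - {y}) \<in> I \<longleftrightarrow> insert x (J - {y}) \<in> I" if "y \<in> J - {y'}" for y
    using fundamental_circuit_transfer(2)[OF M J J' x(1,2) circuits] that by blast
qed

definition shortcut_free :: "'a set set \<Rightarrow> 'a set \<Rightarrow> ('a \<times> 'a) list \<Rightarrow> bool" where
  "shortcut_free I J ps \<longleftrightarrow> distinct (map fst ps) \<and> distinct (map snd ps) \<and>
    (\<forall>p\<in>set ps. exchangeable I J (fst p) (snd p)) \<and>
    sorted_wrt (\<lambda>q p. insert (fst q) (J - {snd p}) \<notin> I) ps"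

lemma shortcut_free_exchange_last:
  assumes M: "matroid E I" and J: "J \<in> I" and sf: "shortcut_free I J (ps @ [(x', y')])"
  shows "shortcut_free I (insert x' (J - {y'})) ps"
proof -
  define J' where "J' = insert x' (J - {y'})"
  have exch_last: "exchangeable I J x' y'" using sf unfolding shortcut_free_def by simp
  have snd_ne: "snd p \<noteq> y'" if "p \<in> set ps" for p
    using sf that unfolding shortcut_free_def by (auto simp: image_iff)
  have exch: "exchangeable I J (fst p) (snd p)" if "p \<in> set ps" for p
    using sf that unfolding shortcut_free_def by simp
  have sorted: "sorted_wrt (\<lambda>q p. insert (fst q) (J - {snd p}) \<notin> I) ps"
    and before_last: "\<And>p. p \<in> set ps \<Longrightarrow> insert (fst p) (J - {y'}) \<notin> I"
    using sf unfolding shortcut_free_def by (simp_all add: sorted_wrt_append)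
  have transfer: "insert (fst p) J' \<notin> I"
    "\<And>y. y \<in> J - {y'} \<Longrightarrow> insert (fst p) (J' - {y}) \<in> I \<longleftrightarrow> insert (fst p) (J - {y}) \<in> I"
    if p: "p \<in> set ps" for p
    using fundamental_circuit_after_exchange[OF M J exch_last _ _ before_last[OF p]]
      exchangeable_source_in[OF M J exch[OF p]] exch[OF p]
    unfolding J'_def exchangeable_def by blast+
  have target: "snd p \<in> J - {y'}" if "p \<in> set ps" for p
    using exch[OF that] snd_ne[OF that] unfolding exchangeable_def by blast
  have "\<forall>p\<in>set ps. exchangeable I J' (fst p) (snd p)"
    using transfer target exch unfolding exchangeable_def J'_def by blast
  moreover have "sorted_wrt (\<lambda>q p. insert (fst q) (J' - {snd p}) \<notin> I) ps"
    using sorted by (rule sorted_wrt_mono_rel[rotated]) (use transfer(2) target in blast)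
  ultimately show ?thesis using sf unfolding shortcut_free_def J'_def by simp
qed

lemma indep_exchange_shortcut_free:
  assumes M: "matroid E I"
  shows "J \<in> I \<Longrightarrow> shortcut_free I J ps \<Longrightarrow> (J - snd ` set ps) \<union> fst ` set ps \<in> I"
proof (induction ps arbitrary: J rule: rev_induct)
  case Nil
  then show ?case by simp
next
  case (snoc p ps)
  obtain x' y' where p: "p = (x', y')" by (cases p)
  have exch: "exchangeable I J x' y'" and targets: "snd ` set ps \<subseteq> J"
    using snoc.prems(2) unfolding shortcut_free_def exchangeable_def p by auto
  have "insert x' (J - {y'}) \<in> I" using exch unfolding exchangeable_def by blast
  then have "(insert x' (J - {y'}) - snd ` set ps) \<union> fst ` set ps \<in> I"
    using snoc.IH shortcut_free_exchange_last[OF M snoc.prems(1)] snoc.prems(2) p by blast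
  moreover have "x' \<notin> J" using exchangeable_source_in[OF M snoc.prems(1) exch] by blast
  then have "(insert x' (J - {y'}) - snd ` set ps) \<union> fst ` set ps
      = (J - snd ` set (ps @ [p])) \<union> fst ` set (ps @ [p])"
    using targets unfolding p by auto
  ultimately show ?case by simp
qed

lemma exchange_superset_iff:
  assumes M: "matroid E I" and J: "J \<in> I" and TJ: "T \<subseteq> J" and x: "x \<in> E"
    and dep: "insert x T \<notin> I" and y: "y \<in> T"
  shows "insert x (J - {y}) \<in> I \<longleftrightarrow> insert x (T - {y}) \<in> I"
proof -
  have T: "T \<in> I" using matroid_indep_subset[OF M J TJ] .
  have "C \<subseteq> insert x J" if "C \<subseteq> insert x T" for C using that TJ by blast
  then show ?thesis using fundamental_circuit_transfer(2)[OF M T J x dep] y TJ by blast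
qed

lemma exchangeable_superset:
  assumes M: "matroid E I" and J: "J \<in> I" and TJ: "T \<subseteq> J" and xy: "exchangeable I T x y"
  shows "exchangeable I J x y"
proof -
  have T: "T \<in> I" using matroid_indep_subset[OF M J TJ] .
  have x: "x \<in> E" using exchangeable_source_in[OF M T xy] by blast
  have dep: "insert x T \<notin> I" and y: "y \<in> T" and exch: "insert x (T - {y}) \<in> I"
    using xy unfolding exchangeable_def by blast+
  have "insert x J \<notin> I" using dep TJ matroid_indep_subset[OF M] by blast
  moreover have "insert x (J - {y}) \<in> I" using exchange_superset_iff[OF M J TJ x dep y] exch by blast
  ultimately show ?thesis using y TJ unfolding exchangeable_def by blast
qed

lemma shortcut_free_superset:
  assumes M: "matroid E I" and J: "J \<in> I" and TJ: "T \<subseteq> J" and sf: "shortcut_free I T ps"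
  shows "shortcut_free I J ps"
proof -
  have T: "T \<in> I" using matroid_indep_subset[OF M J TJ] .
  have exch: "exchangeable I T (fst p) (snd p)" if "p \<in> set ps" for p
    using sf that unfolding shortcut_free_def by blast
  have "sorted_wrt (\<lambda>q p. insert (fst q) (T - {snd p}) \<notin> I) ps"
    using sf unfolding shortcut_free_def by blast
  then have "sorted_wrt (\<lambda>q p. insert (fst q) (J - {snd p}) \<notin> I) ps"
  proof (rule sorted_wrt_mono_rel[rotated])
    fix q p assume qp: "q \<in> set ps" "p \<in> set ps" and blocked: "insert (fst q) (T - {snd p}) \<notin> I"
    have "fst q \<in> E" using exchangeable_source_in[OF M T exch[OF qp(1)]] by blast
    moreover have "insert (fst q) T \<notin> I" "snd p \<in> T"
      using exch[OF qp(1)] exch[OF qp(2)] unfolding exchangeable_def by blast+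
    ultimately show "insert (fst q) (J - {snd p}) \<notin> I"
      using exchange_superset_iff[OF M J TJ] blocked by blast
  qed
  then show ?thesis
    using sf exchangeable_superset[OF M J TJ] exch unfolding shortcut_free_def by blast
qed

section \<open>The exchange graph of a covering of all but one element\<close>

inductive exchange_path ::
  "'k set \<Rightarrow> ('k \<Rightarrow> 'a set set) \<Rightarrow> ('k \<Rightarrow> 'a set) \<Rightarrow> 'a \<Rightarrow> ('a \<times> 'k \<times> 'a) list \<Rightarrow> 'a \<Rightarrow> bool"
  for K M T where
  path_Nil: "exchange_path K M T u [] u"
| path_Cons: "j \<in> K \<Longrightarrow> exchangeable (M j) (T j) u v \<Longrightarrow> exchange_path K M T v ss w \<Longrightarrow>
    exchange_path K M T u ((u, j, v) # ss) w"

definition path_vertex :: "('a \<times> 'k \<times> 'a) list \<Rightarrow> 'a \<Rightarrow> nat \<Rightarrow> 'a" where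
  "path_vertex ss w k = (if k < length ss then fst (ss ! k) else w)"

lemma path_vertex_Cons_Suc [simp]: "path_vertex (s # ss) w (Suc k) = path_vertex ss w k"
  unfolding path_vertex_def by simp

lemma path_vertex_length [simp]: "path_vertex ss w (length ss) = w"
  unfolding path_vertex_def by simp

lemma exchange_path_vertex_0: "exchange_path K M T u ss w \<Longrightarrow> path_vertex ss w 0 = u"
  by (induction rule: exchange_path.induct) (auto simp: path_vertex_def)

lemma exchange_path_nth:
  assumes "exchange_path K M T u ss w" "k < length ss"
  obtains j where "ss ! k = (path_vertex ss w k, j, path_vertex ss w (Suc k))" "j \<in> K"
    "exchangeable (M j) (T j) (path_vertex ss w k) (path_vertex ss w (Suc k))"
proof -
  have "\<exists>j. ss ! k = (path_vertex ss w k, j, path_vertex ss w (Suc k)) \<and> j \<in> K \<and>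
    exchangeable (M j) (T j) (path_vertex ss w k) (path_vertex ss w (Suc k))"
    using assms
  proof (induction arbitrary: k rule: exchange_path.induct)
    case (path_Cons j u v ss w)
    show ?case
    proof (cases k)
      case 0
      then show ?thesis
        using path_Cons.hyps exchange_path_vertex_0[OF path_Cons.hyps(3)] by (auto simp: path_vertex_def)
    next
      case (Suc k')
      then show ?thesis using path_Cons.IH[of k'] path_Cons.prems by simp
    qed
  qed simp
  then show thesis using that by blast
qed

lemma exchange_path_append:
  "exchange_path K M T u ss m \<Longrightarrow> exchange_path K M T m ss' w \<Longrightarrow> exchange_path K M T u (ss @ ss') w"
  by (induction rule: exchange_path.induct) (auto intro: exchange_path.intros)

lemma exchange_path_take_drop:
  "exchange_path K M T u ss w \<Longrightarrow> k \<le> length ss \<Longrightarrow>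
    exchange_path K M T u (take k ss) (path_vertex ss w k) \<and>
    exchange_path K M T (path_vertex ss w k) (drop k ss) w"
proof (induction arbitrary: k rule: exchange_path.induct)
  case (path_Nil u)
  then show ?case by (simp add: path_vertex_def exchange_path.intros)
next
  case (path_Cons j u v ss w)
  show ?case
  proof (cases k)
    case 0
    then show ?thesis using path_Cons.hyps by (simp add: path_vertex_def exchange_path.intros)
  next
    case (Suc k')
    then show ?thesis using path_Cons.IH[of k'] path_Cons.prems path_Cons.hyps(1,2)
      by (auto intro: exchange_path.intros)
  qed
qed

lemma exchange_path_target_in_ground:
  "exchange_path K M T u ss w \<Longrightarrow> u \<in> E \<Longrightarrow> \<forall>j\<in>K. T j \<subseteq> E \<Longrightarrow> w \<in> E"
  by (induction rule: exchange_path.induct) (auto simp: exchangeable_def)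

definition path_sources :: "('a \<times> 'k \<times> 'a) list \<Rightarrow> 'k \<Rightarrow> 'a set" where
  "path_sources ss j = {x. \<exists>y. (x, j, y) \<in> set ss}"

definition path_targets :: "('a \<times> 'k \<times> 'a) list \<Rightarrow> 'k \<Rightarrow> 'a set" where
  "path_targets ss j = {y. \<exists>x. (x, j, y) \<in> set ss}"

definition exchange_pairs :: "('a \<times> 'k \<times> 'a) list \<Rightarrow> 'k \<Rightarrow> ('a \<times> 'a) list" where
  "exchange_pairs ss j = map (\<lambda>s. (fst s, snd (snd s))) (filter (\<lambda>s. fst (snd s) = j) ss)"

lemma mem_exchange_pairs: "p \<in> set (exchange_pairs ss j) \<longleftrightarrow> (fst p, j, snd p) \<in> set ss"
  unfolding exchange_pairs_def by force

lemma exchange_pairs_sources_targets: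
  "fst ` set (exchange_pairs ss j) = path_sources ss j"
  "snd ` set (exchange_pairs ss j) = path_targets ss j"
  unfolding exchange_pairs_def path_sources_def path_targets_def by force+

locale almost_covering =
  fixes E :: "'a set" and K :: "'k set" and M :: "'k \<Rightarrow> 'a set set" and e :: 'a
    and T :: "'k \<Rightarrow> 'a set"
  assumes matroids: "\<forall>j\<in>K. matroid E (M j)"
    and e_in_ground: "e \<in> E"
    and covers: "covering K (E - {e}) M T"
begin

lemma matroid: "j \<in> K \<Longrightarrow> matroid E (M j)"
  using matroids by blast

lemma indep: "j \<in> K \<Longrightarrow> T j \<in> M j"
  using covers unfolding covering_def by blast

lemma Union_eq: "(\<Union>j\<in>K. T j) = E - {e}"
  using covers unfolding covering_def by blast

definition reachable :: "'a set" where
  "reachable = {w. \<exists>ss. exchange_path K M T e ss w}"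

lemma e_reachable: "e \<in> reachable"
  unfolding reachable_def by (blast intro: exchange_path.path_Nil)

lemma reachable_subset_ground: "reachable \<subseteq> E"
  using exchange_path_target_in_ground[OF _ e_in_ground] Union_eq unfolding reachable_def by blast

end

locale shortest_exchange_path = almost_covering +
  fixes ss and w
  assumes path: "exchange_path K M T e ss w"
    and shortest: "\<And>ss'. exchange_path K M T e ss' w \<Longrightarrow> length ss \<le> length ss'"
begin

abbreviation vertex :: "nat \<Rightarrow> 'a" where
  "vertex \<equiv> path_vertex ss w"

lemma shortest_to_vertex:
  assumes k: "k \<le> length ss" and p: "exchange_path K M T e ss' (vertex k)"
  shows "k \<le> length ss'"
proof -
  have "exchange_path K M T (vertex k) (drop k ss) w" using exchange_path_take_drop[OF path k] by blast
  then have "exchange_path K M T e (ss' @ drop k ss) w" by (rule exchange_path_append[OF p])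
  then show ?thesis using shortest[of "ss' @ drop k ss"] k by simp
qed

lemma vertex_inj:
  assumes "a < b" "b \<le> length ss"
  shows "vertex a \<noteq> vertex b"
proof
  assume eq: "vertex a = vertex b"
  have "exchange_path K M T e (take a ss) (vertex b)"
    using exchange_path_take_drop[OF path, of a] assms eq by simp
  from shortest_to_vertex[OF assms(2) this] show False using assms by simp
qed

lemma nth_step:
  assumes "k < length ss"
  obtains j where "ss ! k = (vertex k, j, vertex (Suc k))" "j \<in> K"
    "exchangeable (M j) (T j) (vertex k) (vertex (Suc k))"
  using exchange_path_nth[OF path assms] by blast

lemma step_exchangeable:
  assumes "(x, j, y) \<in> set ss"
  shows "exchangeable (M j) (T j) x y"
proof -
  obtain k where k: "k < length ss" "ss ! k = (x, j, y)"
    using assms by (auto simp: in_set_conv_nth)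
  obtain j' where "ss ! k = (vertex k, j', vertex (Suc k))" "j' \<in> K"
    "exchangeable (M j') (T j') (vertex k) (vertex (Suc k))"
    by (rule nth_step[OF k(1)])
  then show ?thesis using k(2) by simp
qed

lemma no_shortcut:
  assumes ik: "i < k" "k < length ss" and j: "fst (snd (ss ! i)) = j" "fst (snd (ss ! k)) = j"
  shows "insert (vertex i) (T j - {vertex (Suc k)}) \<notin> M j"
proof
  assume shortcut: "insert (vertex i) (T j - {vertex (Suc k)}) \<in> M j"
  have "i < length ss" using ik by simp
  then obtain ji where i: "ss ! i = (vertex i, ji, vertex (Suc i))" "ji \<in> K"
    "exchangeable (M ji) (T ji) (vertex i) (vertex (Suc i))"
    by (rule nth_step)
  obtain jk where k: "ss ! k = (vertex k, jk, vertex (Suc k))"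
    "exchangeable (M jk) (T jk) (vertex k) (vertex (Suc k))"
    by (rule nth_step[OF ik(2)])
  have "ji = j" "jk = j" using i(1) k(1) j by simp_all
  then have "exchangeable (M j) (T j) (vertex i) (vertex (Suc k))"
    using i(3) k(2) shortcut unfolding exchangeable_def by blast
  then have "exchange_path K M T (vertex i) [(vertex i, j, vertex (Suc k))] (vertex (Suc k))"
    using i(2) \<open>ji = j\<close> by (blast intro: exchange_path.intros)
  moreover have "exchange_path K M T e (take i ss) (vertex i)"
    using exchange_path_take_drop[OF path, of i] ik by simp
  ultimately have "exchange_path K M T e (take i ss @ [(vertex i, j, vertex (Suc k))]) (vertex (Suc k))"
    by (rule exchange_path_append[rotated])
  from shortest_to_vertex[OF _ this] show False using ik by simp
qed

lemma distinct_sources: "distinct (map fst ss)"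
  and distinct_targets: "distinct (map (\<lambda>s. snd (snd s)) ss)"
proof -
  have fst: "fst (ss ! k) = vertex k" and snd: "snd (snd (ss ! k)) = vertex (Suc k)"
    if "k < length ss" for k
    by (rule nth_step[OF that], simp)+
  have "fst (ss ! a) \<noteq> fst (ss ! b) \<and> snd (snd (ss ! a)) \<noteq> snd (snd (ss ! b))"
    if "a < b" "b < length ss" for a b
    using vertex_inj[of a b] vertex_inj[of "Suc a" "Suc b"] fst snd that by simp
  then have "fst (ss ! a) \<noteq> fst (ss ! b) \<and> snd (snd (ss ! a)) \<noteq> snd (snd (ss ! b))"
    if "a \<noteq> b" "a < length ss" "b < length ss" for a b
    using that by (metis linorder_neqE_nat)
  then show "distinct (map fst ss)" "distinct (map (\<lambda>s. snd (snd s)) ss)"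
    unfolding distinct_conv_nth by simp_all
qed

lemma exchange_pairs_no_shortcut:
  "sorted_wrt (\<lambda>q p. insert (fst q) (T j - {snd p}) \<notin> M j) (exchange_pairs ss j)"
proof -
  have "sorted_wrt (\<lambda>s t. fst (snd s) = j \<longrightarrow> fst (snd t) = j \<longrightarrow>
      insert (fst s) (T j - {snd (snd t)}) \<notin> M j) ss"
  proof (subst sorted_wrt_iff_nth_less, intro allI impI)
    fix i k assume ik: "i < k" "k < length ss" "fst (snd (ss ! i)) = j" "fst (snd (ss ! k)) = j"
    have "i < length ss" using ik by simp
    have "fst (ss ! i) = vertex i" by (rule nth_step[OF \<open>i < length ss\<close>]) simp
    moreover have "snd (snd (ss ! k)) = vertex (Suc k)" by (rule nth_step[OF ik(2)]) simp
    ultimately show "insert (fst (ss ! i)) (T j - {snd (snd (ss ! k))}) \<notin> M j"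
      using no_shortcut[OF ik] by simp
  qed
  then have "sorted_wrt (\<lambda>s t. fst (snd s) = j \<longrightarrow> fst (snd t) = j \<longrightarrow>
      insert (fst s) (T j - {snd (snd t)}) \<notin> M j) (filter (\<lambda>s. fst (snd s) = j) ss)"
    by (rule sorted_wrt_filter)
  then show ?thesis
    unfolding exchange_pairs_def sorted_wrt_map
    by (rule sorted_wrt_mono_rel[rotated]) simp
qed

lemma exchange_pairs_shortcut_free:
  assumes j: "j \<in> K"
  shows "shortcut_free (M j) (T j) (exchange_pairs ss j)"
  unfolding shortcut_free_def
proof (intro conjI)
  show "distinct (map fst (exchange_pairs ss j))" "distinct (map snd (exchange_pairs ss j))"
    unfolding exchange_pairs_def using distinct_sources distinct_targets
    by (simp_all add: comp_def distinct_map_filter)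
  show "\<forall>p\<in>set (exchange_pairs ss j). exchangeable (M j) (T j) (fst p) (snd p)"
    using step_exchangeable by (auto simp: mem_exchange_pairs)
qed (rule exchange_pairs_no_shortcut)

lemma exchange_indep:
  assumes j: "j \<in> K" and J: "J \<in> M j" "T j \<subseteq> J"
  shows "(J - path_targets ss j) \<union> path_sources ss j \<in> M j"
proof -
  have "shortcut_free (M j) J (exchange_pairs ss j)"
    using shortcut_free_superset[OF matroid[OF j] J exchange_pairs_shortcut_free[OF j]] .
  from indep_exchange_shortcut_free[OF matroid[OF j] J(1) this]
  show ?thesis unfolding exchange_pairs_sources_targets .
qed

lemma vertex_source: "k < length ss \<Longrightarrow> vertex k \<in> (\<Union>j\<in>K. path_sources ss j)"
  by (rule nth_step, assumption) (force simp: path_sources_def dest: nth_mem)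

lemma exchange_covers: "E - {w} \<subseteq> (\<Union>j\<in>K. (T j - path_targets ss j) \<union> path_sources ss j)"
proof
  fix v assume v: "v \<in> E - {w}"
  show "v \<in> (\<Union>j\<in>K. (T j - path_targets ss j) \<union> path_sources ss j)"
  proof (cases "v = e")
    case True
    have "vertex 0 = e" using exchange_path_vertex_0[OF path] .
    then have "ss \<noteq> []" using v True by (auto simp: path_vertex_def)
    then show ?thesis using vertex_source[of 0] \<open>vertex 0 = e\<close> True by auto
  next
    case False
    then obtain l where l: "l \<in> K" "v \<in> T l" using v Union_eq by blast
    show ?thesis
    proof (cases "v \<in> path_targets ss l")
      case True
      then obtain k x where k: "k < length ss" "ss ! k = (x, l, v)"
        unfolding path_targets_def by (auto simp: in_set_conv_nth)
      have "v = vertex (Suc k)" by (rule nth_step[OF k(1)]) (use k(2) in simp)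
      moreover have "Suc k \<noteq> length ss" using calculation v by auto
      ultimately show ?thesis using vertex_source[of "Suc k"] k(1) by auto
    qed (use l in blast)
  qed
qed

end

context almost_covering
begin

lemma exchange_along_path:
  assumes "w \<in> reachable"
  obtains Q where "\<forall>j\<in>K. Q j \<in> M j" "E - {w} \<subseteq> (\<Union>j\<in>K. Q j)"
    "\<And>j. j \<in> K \<Longrightarrow> w \<notin> T j \<Longrightarrow> insert w (T j) \<in> M j \<Longrightarrow> insert w (Q j) \<in> M j"
proof -
  obtain ss where "exchange_path K M T e ss w"
    "\<forall>ss'. exchange_path K M T e ss' w \<longrightarrow> length ss \<le> length ss'"
    using ex_has_least_nat[of "\<lambda>ss. exchange_path K M T e ss w"] assms unfolding reachable_def by blast
  then interpret shortest_exchange_path E K M e T ss w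
    by unfold_locales blast+
  define Q where "Q j = (T j - path_targets ss j) \<union> path_sources ss j" for j
  have Q_indep: "\<forall>j\<in>K. Q j \<in> M j" unfolding Q_def using exchange_indep indep by blast
  have Q_covers: "E - {w} \<subseteq> (\<Union>j\<in>K. Q j)" unfolding Q_def by (rule exchange_covers)
  have Q_insert: "insert w (Q j) \<in> M j" if "j \<in> K" "w \<notin> T j" "insert w (T j) \<in> M j" for j
  proof -
    have "path_targets ss j \<subseteq> T j"
      using step_exchangeable unfolding path_targets_def exchangeable_def by blast
    then have "insert w (Q j) = (insert w (T j) - path_targets ss j) \<union> path_sources ss j"
      unfolding Q_def using that(2) by blast
    then show ?thesis using exchange_indep[OF that(1,3) subset_insertI] by simp
  qed
  show thesis by (rule that[OF Q_indep Q_covers Q_insert])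
qed

lemma reachable_addable_has_covering:
  assumes w: "w \<in> reachable" and j: "j \<in> K" "w \<notin> T j" "insert w (T j) \<in> M j"
  shows "has_covering K E M"
proof -
  obtain Q where Q: "\<forall>j\<in>K. Q j \<in> M j" "E - {w} \<subseteq> (\<Union>j\<in>K. Q j)"
    "\<And>j. j \<in> K \<Longrightarrow> w \<notin> T j \<Longrightarrow> insert w (T j) \<in> M j \<Longrightarrow> insert w (Q j) \<in> M j"
    by (rule exchange_along_path[OF w]) blast
  define R where "R = Q(j := insert w (Q j))"
  have R_indep: "\<forall>i\<in>K. R i \<in> M i" unfolding R_def using Q(1) Q(3)[OF j] by simp
  have "(\<Union>i\<in>K. R i) \<subseteq> E" using R_indep matroid matroid_indep_subset_ground by blast
  moreover have "E - {w} \<subseteq> (\<Union>i\<in>K. R i)" using Q(2) j(1) unfolding R_def by force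
  moreover have "w \<in> R j" unfolding R_def by simp
  ultimately have "(\<Union>i\<in>K. R i) = E" using j(1) by blast
  then show ?thesis using R_indep unfolding has_covering_def covering_def by blast
qed

lemma reachable_restr_base:
  assumes noc: "\<not> has_covering K E M" and j: "j \<in> K"
  shows "max_indep (restr reachable (M j)) (T j \<inter> reachable)"
  unfolding max_indep_restr_iff[OF matroid[OF j]]
proof (intro conjI ballI)
  show "T j \<inter> reachable \<in> M j" using matroid_indep_subset[OF matroid[OF j] indep[OF j]] by blast
  show "T j \<inter> reachable \<subseteq> reachable" by blast
  fix y assume y: "y \<in> reachable - T j \<inter> reachable"
  then have y_notin: "y \<notin> T j" by blast
  have dep: "insert y (T j) \<notin> M j"
    using reachable_addable_has_covering[OF _ j y_notin] y noc by blast
  have "y \<in> E" using y reachable_subset_ground by blast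
  then obtain C where C: "circuit E (M j) C" "C \<subseteq> insert y (T j)"
    "\<And>z. z \<in> T j \<Longrightarrow> z \<in> C \<longleftrightarrow> insert y (T j - {z}) \<in> M j"
    by (rule fundamental_circuit[OF matroid[OF j] indep[OF j] _ dep]) blast
  obtain ss where ss: "exchange_path K M T e ss y" using y unfolding reachable_def by blast
  have "z \<in> reachable" if z: "z \<in> C" "z \<noteq> y" for z
  proof -
    have "z \<in> T j" using z C(2) by blast
    then have "exchangeable (M j) (T j) y z" using C(3) z(1) dep unfolding exchangeable_def by blast
    then have "exchange_path K M T y [(y, j, z)] z" using j by (blast intro: exchange_path.intros)
    then show ?thesis using exchange_path_append[OF ss] unfolding reachable_def by blast
  qed
  then have "C \<subseteq> insert y (T j \<inter> reachable)" using C(2) by blast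
  then show "insert y (T j \<inter> reachable) \<notin> M j"
    using circuit_not_indep[OF C(1)] matroid_indep_subset[OF matroid[OF j]] by blast
qed

lemma has_covering_if_restr_bases_covered:
  assumes W: "W \<subseteq> E" "e \<in> W" and bases: "\<forall>j\<in>K. max_indep (restr W (M j)) (T j \<inter> W)"
    and Q: "\<forall>j\<in>K. Q j \<in> M j" "W \<subseteq> (\<Union>j\<in>K. Q j)"
  shows "has_covering K E M"
proof -
  define R where "R j = (Q j \<inter> W) \<union> (T j - W)" for j
  have "R j \<in> M j" if j: "j \<in> K" for j
  proof -
    have "Q j \<inter> W \<in> M j" using matroid_indep_subset[OF matroid[OF j]] Q(1) j by blast
    then show ?thesis unfolding R_def
      using indep_replace_restr_base[OF matroid[OF j] indep[OF j] W(1)] bases j by blast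
  qed
  moreover have "(\<Union>j\<in>K. R j) = E"
  proof
    show "(\<Union>j\<in>K. R j) \<subseteq> E" using W(1) Union_eq unfolding R_def by blast
    show "E \<subseteq> (\<Union>j\<in>K. R j)"
    proof
      fix v assume "v \<in> E"
      show "v \<in> (\<Union>j\<in>K. R j)"
      proof (cases "v \<in> W")
        case True
        then show ?thesis using Q(2) unfolding R_def by blast
      next
        case False
        then have "v \<in> E - {e}" using \<open>v \<in> E\<close> W(2) by blast
        then show ?thesis using False Union_eq unfolding R_def by blast
      qed
    qed
  qed
  ultimately show ?thesis unfolding has_covering_def covering_def by blast
qed

lemma almost_covering_replace_inside:
  assumes W: "W \<subseteq> E" "e \<in> W" and bases: "\<forall>j\<in>K. max_indep (restr W (M j)) (T j \<inter> W)"
    and S: "covering K (W - {e}) M S"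
  shows "almost_covering E K M e (\<lambda>j. S j \<union> (T j - W))"
proof
  show "\<forall>j\<in>K. matroid E (M j)" by (rule matroids)
  show "e \<in> E" by (rule e_in_ground)
  have "S j \<union> (T j - W) \<in> M j" if j: "j \<in> K" for j
  proof -
    have "S j \<in> M j" "S j \<subseteq> W" using S j unfolding covering_def by blast+
    then show ?thesis using indep_replace_restr_base[OF matroid[OF j] indep[OF j] W(1)] bases j by blast
  qed
  moreover have "(\<Union>j\<in>K. S j \<union> (T j - W)) = E - {e}"
  proof -
    have "(\<Union>j\<in>K. S j \<union> (T j - W)) = (\<Union>j\<in>K. S j) \<union> ((\<Union>j\<in>K. T j) - W)"
      by blast
    also have "\<dots> = (W - {e}) \<union> ((E - {e}) - W)" using S Union_eq unfolding covering_def by simp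
    also have "\<dots> = E - {e}" using W by blast
    finally show ?thesis .
  qed
  ultimately show "covering K (E - {e}) M (\<lambda>j. S j \<union> (T j - W))"
    unfolding covering_def by blast
qed

lemma reachable_spans:
  assumes noc: "\<not> has_covering K E M" and j: "j \<in> K"
  shows "e \<in> span E (M j) (reachable - {e})"
proof -
  have "e \<notin> T j" using Union_eq j by blast
  then have "insert e (T j \<inter> reachable) \<notin> M j"
    using reachable_restr_base[OF noc j] e_reachable unfolding max_indep_restr_iff[OF matroid[OF j]]
    by blast
  moreover have "T j \<inter> reachable \<in> M j" using matroid_indep_subset[OF matroid[OF j] indep[OF j]] by blast
  ultimately have "spans E (M j) (T j \<inter> reachable) e"
    using spans_indep_iff[OF matroid[OF j] _ e_in_ground] by blast
  moreover have "T j \<inter> reachable \<subseteq> reachable - {e}" using \<open>e \<notin> T j\<close> by blast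
  ultimately show ?thesis unfolding span_def spans_def by blast
qed

lemma reachable_covering_no_slack:
  assumes noc: "\<not> has_covering K E M" and S: "covering K (reachable - {e}) M S"
    and i: "i \<in> K" and y: "y \<in> reachable - {e}" "y \<notin> S i"
  shows "insert y (S i) \<notin> M i"
proof
  assume y_indep: "insert y (S i) \<in> M i"
  let ?W = "reachable"
  have WE: "?W \<subseteq> E" by (rule reachable_subset_ground)
  have bases: "\<forall>j\<in>K. max_indep (restr ?W (M j)) (T j \<inter> ?W)"
    using reachable_restr_base[OF noc] by blast
  define U where "U j = S j \<union> (T j - ?W)" for j
  interpret U: almost_covering E K M e U
    unfolding U_def using almost_covering_replace_inside[OF WE e_reachable bases S] .
  have "insert y (S i) \<subseteq> ?W" using y(1) S i unfolding covering_def by blast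
  then have slack: "insert y (S i) \<union> (T i - ?W) \<in> M i"
    using indep_replace_restr_base[OF matroid[OF i] indep[OF i] WE] bases i y_indep by blast
  have "y \<notin> U.reachable"
  proof
    assume "y \<in> U.reachable"
    moreover have "y \<notin> U i" using y unfolding U_def by blast
    ultimately have "insert y (U i \<inter> U.reachable) \<notin> M i"
      using U.reachable_restr_base[OF noc i] unfolding max_indep_restr_iff[OF matroid[OF i]] by blast
    moreover have "insert y (U i \<inter> U.reachable) \<subseteq> insert y (S i) \<union> (T i - ?W)"
      unfolding U_def by blast
    ultimately show False using slack matroid_indep_subset[OF matroid[OF i]] by blast
  qed
  moreover have "y \<in> ?W" using y(1) by blast
  then obtain Q where Q: "\<forall>j\<in>K. Q j \<in> M j" "E - {y} \<subseteq> (\<Union>j\<in>K. Q j)"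
    by (rule exchange_along_path) blast
  ultimately have "U.reachable \<subseteq> (\<Union>j\<in>K. Q j)" using U.reachable_subset_ground by blast
  then have "has_covering K E M"
    using U.has_covering_if_restr_bases_covered[OF U.reachable_subset_ground U.e_reachable _ Q(1)]
      U.reachable_restr_base[OF noc] by blast
  then show False using noc by blast
qed

lemma reachable_tight:
  assumes noc: "\<not> has_covering K E M"
  shows "family_tight K M (reachable - {e})"
proof -
  let ?X = "reachable - {e}"
  have X: "?X \<subseteq> E - {e}" and XE: "?X \<subseteq> E" using reachable_subset_ground by blast+
  have "has_covering K ?X (\<lambda>i. restr ?X (M i))"
    using covering_restr[OF matroids covers X] unfolding has_covering_def by blast
  moreover have "max_indep (restr ?X (M i)) (S i)"
    if S: "covering K ?X (\<lambda>i. restr ?X (M i)) S" and i: "i \<in> K" for S i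
  proof -
    have "S i \<in> M i" "S i \<subseteq> ?X" using S i unfolding covering_def restr_def by blast+
    then show ?thesis
      using reachable_covering_no_slack[OF noc covering_restr_covering[OF S] i]
      unfolding max_indep_restr_iff[OF matroid[OF i]] by blast
  qed
  ultimately show ?thesis unfolding family_tight_iff[OF matroids XE] by blast
qed

end

theorem lemma3p4:
  fixes E :: "'a set" and K :: "'k set" and M :: "'k \<Rightarrow> 'a set set" and e :: 'a
  assumes "\<forall>i\<in>K. matroid E (M i)"
    and "e \<in> E"
    and "has_covering K (E - {e}) (\<lambda>i. restr (E - {e}) (M i))"
  shows "has_covering K E M \<longleftrightarrow>
         \<not> (\<exists>X. X \<subseteq> E - {e} \<and> family_tight K M X \<and> (\<forall>i\<in>K. e \<in> span E (M i) X))"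
proof
  assume "has_covering K E M"
  then show "\<not> (\<exists>X. X \<subseteq> E - {e} \<and> family_tight K M X \<and> (\<forall>i\<in>K. e \<in> span E (M i) X))"
    using tight_spanning_set_prevents_covering[OF assms(1,2)] by blast
next
  assume no_obstruction: "\<not> (\<exists>X. X \<subseteq> E - {e} \<and> family_tight K M X \<and> (\<forall>i\<in>K. e \<in> span E (M i) X))"
  show "has_covering K E M"
  proof (rule ccontr)
    assume noc: "\<not> has_covering K E M"
    obtain T where "covering K (E - {e}) (\<lambda>i. restr (E - {e}) (M i)) T"
      using assms(3) unfolding has_covering_def by blast
    then interpret almost_covering E K M e T
      using assms(1,2) covering_restr_covering by unfold_locales blast+
    have "reachable - {e} \<subseteq> E - {e}" using reachable_subset_ground by blast
    then show False
      using no_obstruction reachable_tight[OF noc] reachable_spans[OF noc] by blast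
  qed
qed

end
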